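(* Let $(\Omega,\mathcal{F})$ be a measurable space, $\mathcal{P}$ a nonempty set of probability measures on it, $\hat{\mathbb{E}}[Z]=\sup_{P\in\mathcal{P}}E_P[Z]$, and let $X,Y$ be random variables with $\hat{\mathbb{E}}[X^2]+\hat{\mathbb{E}}[Y^2]<\infty$. Put $U=\frac{X+Y}{2}$ and $V=\frac{X-Y}{2}$. Then (i) $\overline{C}(X,Y)=\max_{\beta\in\mathbb{R}}\min_{\alpha\in\mathbb{R}}\hat{\mathbb{E}}[(U-\alpha)^2-(V-\beta)^2]$, and there exist $\alpha^*\in M_U$, $\beta^*\in M_V$ such that $\overline{C}(X,Y)=\hat{\mathbb{E}}[(U-\alpha^* )^2-(V-\beta^* )^2]$; (ii) $\underline{C}(X,Y)=\min_{\alpha\in\mathbb{R}}\max_{\beta\in\mathbb{R}}\left(-\hat{\mathbb{E}}[-(U-\alpha)^2+(V-\beta)^2]\right)$, and there exist $\alpha^*\in M_U$, $\beta^*\in M_V$ such that $\underline{C}(X,Y)=-\hat{\mathbb{E}}[-(U-\alpha^* )^2+(V-\beta^* )^2]$.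
   Context: For a random variable $W$ with $\hat{\mathbb{E}}[W^2]<\infty$: $\overline{\mu}_W=\hat{\mathbb{E}}[W]$, $\underline{\mu}_W=-\hat{\mathbb{E}}[-W]$, $M_W=[\underline{\mu}_W,\overline{\mu}_W]$. Upper covariance $\overline{C}(X,Y)=\max_{\mu_2\in M_Y}\min_{\mu_1\in M_X}\hat{\mathbb{E}}[(X-\mu_1)(Y-\mu_2)]$; lower covariance $\underline{C}(X,Y)=\min_{\mu_2\in M_Y}\max_{\mu_1\in M_X}\left(-\hat{\mathbb{E}}[-(X-\mu_1)(Y-\mu_2)]\right)$. *)

theory Defs
  imports "HOL-Probability.Probability"
begin

definition sub_exp :: "'a measure set \<Rightarrow> ('a \<Rightarrow> real) \<Rightarrow> real" where
  "sub_exp Ps Z = (SUP P\<in>Ps. integral\<^sup>L P Z)"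

definition upper_mean :: "'a measure set \<Rightarrow> ('a \<Rightarrow> real) \<Rightarrow> real" where
  "upper_mean Ps W = sub_exp Ps W"

definition lower_mean :: "'a measure set \<Rightarrow> ('a \<Rightarrow> real) \<Rightarrow> real" where
  "lower_mean Ps W = - sub_exp Ps (\<lambda>w. - W w)"

definition mean_set :: "'a measure set \<Rightarrow> ('a \<Rightarrow> real) \<Rightarrow> real set" where
  "mean_set Ps W = {lower_mean Ps W .. upper_mean Ps W}"

definition upper_cov :: "'a measure set \<Rightarrow> ('a \<Rightarrow> real) \<Rightarrow> ('a \<Rightarrow> real) \<Rightarrow> real" where
  "upper_cov Ps X Y = (SUP m2\<in>mean_set Ps Y. INF m1\<in>mean_set Ps X.
       sub_exp Ps (\<lambda>w. (X w - m1) * (Y w - m2)))"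

definition lower_cov :: "'a measure set \<Rightarrow> ('a \<Rightarrow> real) \<Rightarrow> ('a \<Rightarrow> real) \<Rightarrow> real" where
  "lower_cov Ps X Y = (INF m2\<in>mean_set Ps Y. SUP m1\<in>mean_set Ps X.
       - sub_exp Ps (\<lambda>w. - ((X w - m1) * (Y w - m2))))"

text \<open>v = max_{b in R} min_{a in R} F b a, with all the max/min attained.\<close>
definition is_maxmin :: "real \<Rightarrow> (real \<Rightarrow> real \<Rightarrow> real) \<Rightarrow> bool" where
  "is_maxmin v F \<longleftrightarrow>
     (\<forall>b. \<exists>a0. \<forall>a. F b a0 \<le> F b a) \<and>
     (\<exists>b0. (INF a. F b0 a) = v) \<and> (\<forall>b. (INF a. F b a) \<le> v)"

text \<open>v = min_{a in R} max_{b in R} F a b, with all the min/max attained.\<close>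
definition is_minmax :: "real \<Rightarrow> (real \<Rightarrow> real \<Rightarrow> real) \<Rightarrow> bool" where
  "is_minmax v F \<longleftrightarrow>
     (\<forall>a. \<exists>b0. \<forall>b. F a b \<le> F a b0) \<and>
     (\<exists>a0. (SUP b. F a0 b) = v) \<and> (\<forall>a. v \<le> (SUP b. F a b))"

end

theory Submission
  imports Defs
begin

(* Write x P, y P and a P for the P-expectations of X, Y and X * Y. Every quantity in the
   statement is a supremum over P of a quadratic in the centring constants: E_P[(X - m1)(Y - m2)]
   = a P - m2 x P - m1 y P + m1 m2, and the substitution m1 = alpha + beta, m2 = alpha - beta turns
   (X - m1)(Y - m2) into (U - alpha)^2 - (V - beta)^2. The key observation is that the covariance
   of a two-point mixture l P + (1 - l) Q, evaluated at the mixture means, bounds both the upper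
   covariance and max_beta min_alpha of the second expression from below. Conversely, if all these
   mixture covariances are at most c, both quantities are at most c: otherwise the sublevel sets of
   a family of quadratics with a common leading coefficient would fail to cover an interval, Helly's
   theorem on the line reduces this to two members, and two such quadratics have a convex
   combination that stays above c. Hence the two quantities coincide; the extremal centring
   constants exist by continuity on the compact mean intervals. Part (ii) is part (i) for (X, -Y). *)

section \<open>A minimax lemma for quadratics on an interval\<close>

lemma quadratic_le_between:
  fixes k b c z p1 p2 t :: real
  assumes "0 \<le> k" "p1 \<le> t" "t \<le> p2"
    and "k*p1^2 + b*p1 + c \<le> z" "k*p2^2 + b*p2 + c \<le> z"
  shows "k*t^2 + b*t + c \<le> z"
proof (cases "p1 = p2")
  case True
  then show ?thesis using assms by auto
next
  case False
  with assms have lt: "p1 < p2" by auto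
  have "(p2 - p1)*(k*t^2 + b*t + c)
      = (p2 - t)*(k*p1^2 + b*p1 + c) + (t - p1)*(k*p2^2 + b*p2 + c) - k*((p2 - p1)*(t - p1)*(p2 - t))"
    by (simp add: power2_eq_square algebra_simps)
  also have "\<dots> \<le> (p2 - t)*(k*p1^2 + b*p1 + c) + (t - p1)*(k*p2^2 + b*p2 + c)"
    using assms lt by simp
  also have "\<dots> \<le> (p2 - t)*z + (t - p1)*z"
    using assms by (intro add_mono mult_left_mono) auto
  also have "\<dots> = (p2 - p1)*z"
    by (simp add: algebra_simps)
  finally have "(p2 - p1)*(k*t^2 + b*t + c) \<le> (p2 - p1)*z" .
  then show ?thesis using lt by simp
qed

lemma quadratic_sublevel_interval:
  fixes k b c z lo hi :: real
  assumes "0 \<le> k"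
  defines "S \<equiv> {t \<in> {lo..hi}. k*t^2 + b*t + c \<le> z}"
  shows "compact S" and "is_interval S"
proof -
  have "S = {lo..hi} \<inter> {t. k*t^2 + b*t + c \<le> z}" unfolding S_def by auto
  then show "compact S"
    by (auto intro!: compact_Int_closed closed_Collect_le continuous_intros)
  show "is_interval S"
    unfolding is_interval_1 S_def using quadratic_le_between[OF assms(1)] by fastforce
qed

lemma Helly_real_intervals:
  fixes J :: "'i \<Rightarrow> real set"
  assumes "I \<noteq> {}"
    and J: "\<And>i. i \<in> I \<Longrightarrow> compact (J i) \<and> is_interval (J i) \<and> J i \<noteq> {}"
    and meet: "\<And>i j. i \<in> I \<Longrightarrow> j \<in> I \<Longrightarrow> J i \<inter> J j \<noteq> {}"
  shows "\<exists>t. \<forall>i\<in>I. t \<in> J i"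
proof -
  have Inf_le_Sup: "Inf (J i) \<le> Sup (J j)" if ij: "i \<in> I" "j \<in> I" for i j
  proof -
    obtain s where "s \<in> J i" "s \<in> J j" using meet[OF ij] by blast
    then show ?thesis using J ij
      by (meson bounded_imp_bdd_above bounded_imp_bdd_below cInf_lower cSup_upper
          compact_imp_bounded order_trans)
  qed
  define t where "t = (SUP i\<in>I. Inf (J i))"
  have "t \<in> J j" if j: "j \<in> I" for j
  proof (rule mem_is_interval_1_I)
    have bdd: "bdd_above ((\<lambda>i. Inf (J i)) ` I)"
      using Inf_le_Sup[OF _ j] by (intro bdd_aboveI) blast
    show "Inf (J j) \<le> t" unfolding t_def by (rule cSUP_upper[OF j bdd])
    show "t \<le> Sup (J j)" unfolding t_def using assms(1) Inf_le_Sup[OF _ j] by (rule cSUP_least)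
    have "J j \<noteq> {}" "bdd_below (J j)" "bdd_above (J j)" "closed (J j)"
      using J[OF j] by (auto simp: compact_imp_closed bounded_imp_bdd_above
          bounded_imp_bdd_below compact_imp_bounded)
    then show "Inf (J j) \<in> J j" "Sup (J j) \<in> J j"
      by (auto intro: closed_contains_Inf closed_contains_Sup)
  qed (use J[OF j] in blast)
  then show ?thesis by blast
qed

lemma mixture_above_near_crossing:
  fixes f1 f2 :: "real \<Rightarrow> real"
  assumes k: "0 \<le> k" and w: "z < w" and d: "d2 < d1"
    and expand1: "\<And>t. f1 t = w + d1 * (t - r) + k * (t - r)^2"
    and expand2: "\<And>t. f2 t = w + d2 * (t - r) + k * (t - r)^2"
    and above: "\<And>t. t \<in> {lo..hi} \<Longrightarrow> z < f1 t \<or> z < f2 t"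
  shows "\<exists>l\<in>{0..1}. \<forall>t\<in>{lo..hi}. z < l * f1 t + (1 - l) * f2 t"
proof -
  have diff: "f1 t - f2 t = (d1 - d2) * (t - r)" for t
    unfolding expand1 expand2 by (simp add: algebra_simps)
  consider "0 \<le> d2" | "d1 \<le> 0" | "d2 < 0" "0 < d1" by linarith
  then show ?thesis
  proof cases
    case 1
    have "z < f2 t" if t: "t \<in> {lo..hi}" for t
    proof (cases "r \<le> t")
      case True
      then show ?thesis using expand2[of t] 1 k w by (smt (verit) mult_nonneg_nonneg zero_le_power2)
    next
      case False
      then show ?thesis using diff[of t] above[OF t] d by (smt (verit) mult_pos_neg)
    qed
    then show ?thesis by (intro bexI[of _ 0]) auto
  next
    case 2
    have "z < f1 t" if t: "t \<in> {lo..hi}" for t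
    proof (cases "t \<le> r")
      case True
      then show ?thesis using expand1[of t] 2 k w
        by (smt (verit) mult_nonpos_nonpos mult_nonneg_nonneg zero_le_power2)
    next
      case False
      then show ?thesis using diff[of t] above[OF t] d by (smt (verit) mult_pos_pos)
    qed
    then show ?thesis by (intro bexI[of _ 1]) auto
  next
    case 3
    define l where "l = - d2 / (d1 - d2)"
    have l: "l \<in> {0..1}" and slope: "l * d1 + (1 - l) * d2 = 0"
      using 3 unfolding l_def by (auto simp: field_simps)
    have "w \<le> l * f1 t + (1 - l) * f2 t" for t
    proof -
      have "l * f1 t + (1 - l) * f2 t = w + (l * d1 + (1 - l) * d2) * (t - r) + k * (t - r)^2"
        unfolding expand1 expand2 by (simp add: algebra_simps)
      then show ?thesis using slope k by simp
    qed
    then show ?thesis using l w by (meson less_le_trans)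
  qed
qed

lemma crossing_quadratics_mixture_above:
  fixes f1 f2 :: "real \<Rightarrow> real"
  assumes k: "0 \<le> k"
    and f1: "\<And>t. f1 t = k*t^2 + b1*t + c1" and f2: "\<And>t. f2 t = k*t^2 + b2*t + c2"
    and p: "p1 < p2" "p1 \<in> {lo..hi}" "p2 \<in> {lo..hi}" and le: "f1 p1 \<le> z" "f2 p2 \<le> z"
    and above: "\<And>t. t \<in> {lo..hi} \<Longrightarrow> z < f1 t \<or> z < f2 t"
  shows "\<exists>l\<in>{0..1}. \<forall>t\<in>{lo..hi}. z < l * f1 t + (1 - l) * f2 t"
proof -
  have "z < f1 p2" using above[OF p(3)] le(2) by auto
  have "z < f2 p1" using above[OF p(2)] le(1) by auto
  with \<open>z < f1 p2\<close> le have "0 < (b1 - b2) * (p2 - p1)"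
    unfolding f1 f2 by (simp add: algebra_simps)
  with p(1) have b: "b2 < b1" by (simp add: zero_less_mult_iff)
  \<comment> \<open>f1 - f2 is affine and changes sign between p1 and p2, at the point r\<close>
  define r where "r = (c2 - c1) / (b1 - b2)"
  have diff: "f1 t - f2 t = (b1 - b2) * (t - r)" for t
    using b unfolding f1 f2 r_def by (simp add: field_simps)
  have "(b1 - b2) * (p1 - r) < 0" using diff[of p1] \<open>z < f2 p1\<close> le(1) by linarith
  with b have "p1 < r" by (simp add: mult_less_0_iff)
  have "0 < (b1 - b2) * (p2 - r)" using diff[of p2] \<open>z < f1 p2\<close> le(2) by linarith
  with b have "r < p2" by (simp add: zero_less_mult_iff)
  with \<open>p1 < r\<close> have r: "r \<in> {lo..hi}" using p by auto
  define w where "w = f1 r"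
  have "f2 r = w" using diff[of r] unfolding w_def by simp
  with above[OF r] have w: "z < w" unfolding w_def by auto
  show ?thesis
  proof (rule mixture_above_near_crossing[OF k w _ _ _ above])
    show "2*k*r + b2 < 2*k*r + b1" using b by simp
    show "f1 t = w + (2*k*r + b1) * (t - r) + k * (t - r)^2" for t
      unfolding w_def f1 by (simp add: power2_eq_square algebra_simps)
    show "f2 t = w + (2*k*r + b2) * (t - r) + k * (t - r)^2" for t
      using \<open>f2 r = w\<close> unfolding f2 by (simp add: power2_eq_square algebra_simps)
  qed
qed

lemma two_quadratics_mixture_above:
  fixes f1 f2 :: "real \<Rightarrow> real"
  assumes k: "0 \<le> k"
    and f1: "\<And>t. f1 t = k*t^2 + b1*t + c1" and f2: "\<And>t. f2 t = k*t^2 + b2*t + c2"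
    and above: "\<And>t. t \<in> {lo..hi} \<Longrightarrow> z < f1 t \<or> z < f2 t"
  shows "\<exists>l\<in>{0..1}. \<forall>t\<in>{lo..hi}. z < l * f1 t + (1 - l) * f2 t"
proof (cases "\<forall>t\<in>{lo..hi}. z < f1 t")
  case True
  then show ?thesis by (intro bexI[of _ 1]) auto
next
  case False
  then obtain p1 where p1: "p1 \<in> {lo..hi}" "f1 p1 \<le> z" by (auto simp: not_less)
  show ?thesis
  proof (cases "\<forall>t\<in>{lo..hi}. z < f2 t")
    case True
    then show ?thesis by (intro bexI[of _ 0]) auto
  next
    case False
    then obtain p2 where p2: "p2 \<in> {lo..hi}" "f2 p2 \<le> z" by (auto simp: not_less)
    have "p1 \<noteq> p2" using above p1 p2 by force
    then consider "p1 < p2" | "p2 < p1" by linarith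
    then show ?thesis
    proof cases
      case 1
      show ?thesis
        by (rule crossing_quadratics_mixture_above[OF k f1 f2 1 p1(1) p2(1) p1(2) p2(2) above])
    next
      case 2
      obtain l where "l \<in> {0..1}" "\<forall>t\<in>{lo..hi}. z < l * f2 t + (1 - l) * f1 t"
        using crossing_quadratics_mixture_above[OF k f2 f1 2 p2(1) p1(1) p2(2) p1(2)] above
        by blast
      then show ?thesis by (intro bexI[of _ "1 - l"]) (auto simp: add.commute)
    qed
  qed
qed

lemma quadratic_family_two_point_mixture:
  fixes f :: "'i \<Rightarrow> real \<Rightarrow> real"
  assumes k: "0 \<le> k" and lohi: "lo \<le> hi"
    and quad: "\<And>i t. f i t = k*t^2 + b i*t + c i"
    and above: "\<And>t. t \<in> {lo..hi} \<Longrightarrow> \<exists>i\<in>I. z < f i t"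
  shows "\<exists>i\<in>I. \<exists>j\<in>I. \<exists>l\<in>{0..1}. \<forall>t\<in>{lo..hi}. z < l * f i t + (1 - l) * f j t"
proof -
  have I: "I \<noteq> {}" using above[of lo] lohi by auto
  have "\<exists>i\<in>I. \<exists>j\<in>I. \<forall>t\<in>{lo..hi}. z < f i t \<or> z < f j t"
  proof (rule ccontr)
    assume "\<not> ?thesis"
    then have meet: "\<exists>t\<in>{lo..hi}. f i t \<le> z \<and> f j t \<le> z" if "i \<in> I" "j \<in> I" for i j
      using that by (auto simp: not_less)
    define J where "J i = {t \<in> {lo..hi}. k*t^2 + b i*t + c i \<le> z}" for i
    have "\<exists>t. \<forall>i\<in>I. t \<in> J i"
    proof (rule Helly_real_intervals)
      show "I \<noteq> {}" by (rule I)
      show "compact (J i) \<and> is_interval (J i) \<and> J i \<noteq> {}" if "i \<in> I" for i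
        using quadratic_sublevel_interval[OF k] meet[OF that that] unfolding J_def quad by auto
      show "J i \<inter> J j \<noteq> {}" if "i \<in> I" "j \<in> I" for i j
        using meet[OF that] unfolding J_def quad by auto
    qed
    then obtain t where t: "\<forall>i\<in>I. t \<in> J i" by blast
    with I have "t \<in> {lo..hi}" unfolding J_def by blast
    then show False using above t unfolding J_def quad by force
  qed
  then obtain i j where "i \<in> I" "j \<in> I" "\<forall>t\<in>{lo..hi}. z < f i t \<or> z < f j t" by blast
  with two_quadratics_mixture_above[OF k quad quad] show ?thesis by blast
qed

section \<open>Mean intervals and mixtures\<close>

definition interval_hull :: "'i set \<Rightarrow> ('i \<Rightarrow> real) \<Rightarrow> real set" where
  "interval_hull I z = {(INF i\<in>I. z i)..(SUP i\<in>I. z i)}"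

lemma mean_set_eq_interval_hull:
  assumes "\<And>P. P \<in> Ps \<Longrightarrow> integral\<^sup>L P W = w P"
  shows "mean_set Ps W = interval_hull Ps w"
proof -
  have "sub_exp Ps W = (SUP P\<in>Ps. w P)" "sub_exp Ps (\<lambda>\<omega>. - W \<omega>) = (SUP P\<in>Ps. - w P)"
    unfolding sub_exp_def using assms by (auto intro: SUP_cong)
  then show ?thesis
    unfolding mean_set_def lower_mean_def upper_mean_def interval_hull_def Inf_real_def
    by (simp add: image_image)
qed

context
  fixes I :: "'i set" and z :: "'i \<Rightarrow> real" and K :: real
  assumes bound: "\<And>i. i \<in> I \<Longrightarrow> \<bar>z i\<bar> \<le> K"
begin

lemma
  shows bdd_below_bounded_image: "bdd_below (z ` I)"
    and bdd_above_bounded_image: "bdd_above (z ` I)"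
  using bound by (force intro!: bdd_belowI[of _ "-K"] bdd_aboveI[of _ K] simp: abs_le_iff)+

lemma mem_interval_hull: "i \<in> I \<Longrightarrow> z i \<in> interval_hull I z"
  using bdd_below_bounded_image bdd_above_bounded_image unfolding interval_hull_def
  by (auto intro: cINF_lower cSUP_upper)

lemma interval_hull_nonempty: "I \<noteq> {} \<Longrightarrow> interval_hull I z \<noteq> {}"
  using mem_interval_hull by blast

lemma interval_hull_subset:
  assumes "I \<noteq> {}"
  shows "interval_hull I z \<subseteq> {-K..K}"
proof -
  have "-K \<le> (INF i\<in>I. z i)" "(SUP i\<in>I. z i) \<le> K"
    using assms bound by (force intro: cINF_greatest cSUP_least simp: abs_le_iff)+
  then show ?thesis unfolding interval_hull_def by auto
qed

end

lemma convex_interval_hull: "convex (interval_hull I z)"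
  unfolding interval_hull_def by (rule convex_real_interval)

definition mix :: "('i \<Rightarrow> real) \<Rightarrow> 'i \<Rightarrow> 'i \<Rightarrow> real \<Rightarrow> real" where
  "mix z i j l = l * z i + (1 - l) * z j"

lemma mix_mem_convex:
  "convex S \<Longrightarrow> z i \<in> S \<Longrightarrow> z j \<in> S \<Longrightarrow> l \<in> {0..1} \<Longrightarrow> mix z i j l \<in> S"
  unfolding mix_def using convexD[of S "z i" "z j" l "1 - l"] by auto

section \<open>Maximin over a bounded family of moments\<close>

lemma continuous_on_Icc_if_quadratic_modulus:
  fixes F :: "real \<Rightarrow> real"
  assumes "0 \<le> C"
    and modulus: "\<And>s t. s \<in> {lo..hi} \<Longrightarrow> t \<in> {lo..hi} \<Longrightarrow> F s \<le> F t + \<bar>s - t\<bar> * (\<bar>s\<bar> + \<bar>t\<bar> + C)"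
  shows "continuous_on {lo..hi} F"
proof (rule lipschitz_on_continuous_on)
  let ?L = "2 * (\<bar>lo\<bar> + \<bar>hi\<bar>) + C"
  show "?L-lipschitz_on {lo..hi} F"
  proof (rule lipschitz_onI)
    fix s t assume st: "s \<in> {lo..hi}" "t \<in> {lo..hi}"
    have "\<bar>s - t\<bar> * (\<bar>s\<bar> + \<bar>t\<bar> + C) \<le> \<bar>s - t\<bar> * ?L"
      using st by (intro mult_left_mono) (auto simp: abs_le_iff)
    then show "dist (F s) (F t) \<le> ?L * dist s t"
      using modulus[OF st] modulus[OF st(2,1)]
      by (simp add: dist_real_def abs_le_iff abs_minus_commute add.commute mult.commute)
  qed (use assms(1) in simp)
qed

lemma abs_square_diff_le:
  fixes s t w :: real
  shows "\<bar>(s - w)^2 - (t - w)^2\<bar> \<le> \<bar>s - t\<bar> * (\<bar>s\<bar> + \<bar>t\<bar> + 2 * \<bar>w\<bar>)"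
proof -
  have "(s - w)^2 - (t - w)^2 = (s - t) * (s + t - 2 * w)"
    by (simp add: power2_eq_square algebra_simps)
  moreover have "\<bar>s + t - 2 * w\<bar> \<le> \<bar>s\<bar> + \<bar>t\<bar> + 2 * \<bar>w\<bar>" by linarith
  ultimately show ?thesis by (simp add: abs_mult mult_left_mono)
qed

(* x P, y P and a P stand for the P-expectations of X, Y and X * Y, so that cross_moment P m1 m2
   is E_P[(X - m1)(Y - m2)]. *)
locale bounded_moments =
  fixes Ps :: "'p set" and x y a :: "'p \<Rightarrow> real" and K :: real
  assumes nonempty: "Ps \<noteq> {}"
    and x_bound: "\<And>P. P \<in> Ps \<Longrightarrow> \<bar>x P\<bar> \<le> K"
    and y_bound: "\<And>P. P \<in> Ps \<Longrightarrow> \<bar>y P\<bar> \<le> K"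
    and a_bound: "\<And>P. P \<in> Ps \<Longrightarrow> \<bar>a P\<bar> \<le> K"
begin

definition cross_moment :: "'p \<Rightarrow> real \<Rightarrow> real \<Rightarrow> real" where
  "cross_moment P m1 m2 = a P - m2 * x P - m1 * y P + m1 * m2"

definition upper_cross :: "real \<Rightarrow> real \<Rightarrow> real" where
  "upper_cross m1 m2 = (SUP P\<in>Ps. cross_moment P m1 m2)"

definition u :: "'p \<Rightarrow> real" where
  "u P = (x P + y P) / 2"

definition v :: "'p \<Rightarrow> real" where
  "v P = (x P - y P) / 2"

(* The sublinear expectation of (U - alpha)^2 - (V - beta)^2, an integrand equal to
   (X - (alpha + beta))(Y - (alpha - beta)). *)
definition sq_diff :: "real \<Rightarrow> real \<Rightarrow> real" where
  "sq_diff \<alpha> \<beta> = upper_cross (\<alpha> + \<beta>) (\<alpha> - \<beta>)"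

definition min_sq_diff :: "real \<Rightarrow> real" where
  "min_sq_diff \<beta> = (INF \<alpha>. sq_diff \<alpha> \<beta>)"

definition min_cross :: "real \<Rightarrow> real" where
  "min_cross m2 = (INF m1\<in>interval_hull Ps x. upper_cross m1 m2)"

definition cov_value :: real where
  "cov_value = (SUP m2\<in>interval_hull Ps y. min_cross m2)"

definition mixture_cov :: "'p \<Rightarrow> 'p \<Rightarrow> real \<Rightarrow> real" where
  "mixture_cov P Q l = mix a P Q l - mix x P Q l * mix y P Q l"

lemma K_nonneg: "0 \<le> K"
  using nonempty x_bound by fastforce

lemma u_bound: "P \<in> Ps \<Longrightarrow> \<bar>u P\<bar> \<le> K"
  using x_bound[of P] y_bound[of P] unfolding u_def by (simp add: abs_le_iff)

lemma v_bound: "P \<in> Ps \<Longrightarrow> \<bar>v P\<bar> \<le> K"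
  using x_bound[of P] y_bound[of P] unfolding v_def by (simp add: abs_le_iff)

lemma cross_moment_abs_le:
  assumes "P \<in> Ps"
  shows "\<bar>cross_moment P m1 m2\<bar> \<le> K + \<bar>m2\<bar> * K + \<bar>m1\<bar> * K + \<bar>m1\<bar> * \<bar>m2\<bar>"
proof -
  have "\<bar>cross_moment P m1 m2\<bar> \<le> \<bar>a P\<bar> + \<bar>m2\<bar> * \<bar>x P\<bar> + \<bar>m1\<bar> * \<bar>y P\<bar> + \<bar>m1\<bar> * \<bar>m2\<bar>"
    unfolding cross_moment_def by (simp add: abs_mult[symmetric])
  also have "\<dots> \<le> K + \<bar>m2\<bar> * K + \<bar>m1\<bar> * K + \<bar>m1\<bar> * \<bar>m2\<bar>"
    using x_bound y_bound a_bound assms by (intro add_mono mult_left_mono) auto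
  finally show ?thesis .
qed

lemma cross_moment_le_upper_cross: "P \<in> Ps \<Longrightarrow> cross_moment P m1 m2 \<le> upper_cross m1 m2"
  unfolding upper_cross_def
  by (rule cSUP_upper) (auto intro: bdd_above_bounded_image cross_moment_abs_le)

lemma upper_cross_le: "(\<And>P. P \<in> Ps \<Longrightarrow> cross_moment P m1 m2 \<le> c) \<Longrightarrow> upper_cross m1 m2 \<le> c"
  unfolding upper_cross_def using nonempty by (rule cSUP_least)

lemma less_upper_cross_imp: "c < upper_cross m1 m2 \<Longrightarrow> \<exists>P\<in>Ps. c < cross_moment P m1 m2"
  unfolding upper_cross_def
  using less_cSUP_iff[OF nonempty bdd_above_bounded_image[of Ps "\<lambda>P. cross_moment P m1 m2",
        OF cross_moment_abs_le]] by blast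

lemma cross_moment_sq_diff:
  "cross_moment P (\<alpha> + \<beta>) (\<alpha> - \<beta>) = (\<alpha> - u P)^2 - (\<beta> - v P)^2 + (a P - x P * y P)"
  unfolding cross_moment_def u_def v_def by (simp add: power2_eq_square field_simps)

lemma mix_cross_moment:
  "l * cross_moment P m1 m2 + (1 - l) * cross_moment Q m1 m2
     = mixture_cov P Q l + (m1 - mix x P Q l) * (m2 - mix y P Q l)"
  unfolding cross_moment_def mixture_cov_def mix_def by (simp add: algebra_simps)

lemma mix_cross_moment_le_upper_cross:
  assumes "P \<in> Ps" "Q \<in> Ps" "l \<in> {0..1}"
  shows "l * cross_moment P m1 m2 + (1 - l) * cross_moment Q m1 m2 \<le> upper_cross m1 m2"
proof -
  have "l * cross_moment P m1 m2 + (1 - l) * cross_moment Q m1 m2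
      \<le> l * upper_cross m1 m2 + (1 - l) * upper_cross m1 m2"
    using assms by (intro add_mono mult_left_mono cross_moment_le_upper_cross) auto
  then show ?thesis by (simp add: algebra_simps)
qed

lemma sq_diff_le_if_closer:
  assumes "\<And>P. P \<in> Ps \<Longrightarrow> \<bar>\<alpha>' - u P\<bar> \<le> \<bar>\<alpha> - u P\<bar>"
  shows "sq_diff \<alpha>' \<beta> \<le> sq_diff \<alpha> \<beta>"
  unfolding sq_diff_def
proof (rule upper_cross_le)
  fix P assume P: "P \<in> Ps"
  have "cross_moment P (\<alpha>' + \<beta>) (\<alpha>' - \<beta>) \<le> cross_moment P (\<alpha> + \<beta>) (\<alpha> - \<beta>)"
    using assms[OF P] unfolding cross_moment_sq_diff abs_le_square_iff by simp
  then show "cross_moment P (\<alpha>' + \<beta>) (\<alpha>' - \<beta>) \<le> upper_cross (\<alpha> + \<beta>) (\<alpha> - \<beta>)"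
    using cross_moment_le_upper_cross[OF P] by (rule order_trans)
qed

lemma sq_diff_modulus_alpha:
  "sq_diff \<alpha> \<beta> \<le> sq_diff \<alpha>' \<beta> + \<bar>\<alpha> - \<alpha>'\<bar> * (\<bar>\<alpha>\<bar> + \<bar>\<alpha>'\<bar> + 2 * K)"
  unfolding sq_diff_def
proof (rule upper_cross_le)
  fix P assume P: "P \<in> Ps"
  have "\<bar>\<alpha> - \<alpha>'\<bar> * (\<bar>\<alpha>\<bar> + \<bar>\<alpha>'\<bar> + 2 * \<bar>u P\<bar>) \<le> \<bar>\<alpha> - \<alpha>'\<bar> * (\<bar>\<alpha>\<bar> + \<bar>\<alpha>'\<bar> + 2 * K)"
    using u_bound[OF P] by (intro mult_left_mono) auto
  with abs_square_diff_le[of \<alpha> "u P" \<alpha>'] cross_moment_le_upper_cross[OF P, of "\<alpha>' + \<beta>" "\<alpha>' - \<beta>"]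
  show "cross_moment P (\<alpha> + \<beta>) (\<alpha> - \<beta>)
      \<le> upper_cross (\<alpha>' + \<beta>) (\<alpha>' - \<beta>) + \<bar>\<alpha> - \<alpha>'\<bar> * (\<bar>\<alpha>\<bar> + \<bar>\<alpha>'\<bar> + 2 * K)"
    unfolding cross_moment_sq_diff by (simp add: abs_le_iff)
qed

lemma sq_diff_modulus_beta:
  "sq_diff \<alpha> \<beta> \<le> sq_diff \<alpha> \<beta>' + \<bar>\<beta> - \<beta>'\<bar> * (\<bar>\<beta>\<bar> + \<bar>\<beta>'\<bar> + 2 * K)"
  unfolding sq_diff_def
proof (rule upper_cross_le)
  fix P assume P: "P \<in> Ps"
  have "\<bar>\<beta>' - \<beta>\<bar> * (\<bar>\<beta>'\<bar> + \<bar>\<beta>\<bar> + 2 * \<bar>v P\<bar>) \<le> \<bar>\<beta> - \<beta>'\<bar> * (\<bar>\<beta>\<bar> + \<bar>\<beta>'\<bar> + 2 * K)"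
    using v_bound[OF P] by (simp add: abs_minus_commute add.commute mult_left_mono)
  with abs_square_diff_le[of \<beta>' "v P" \<beta>] cross_moment_le_upper_cross[OF P, of "\<alpha> + \<beta>'" "\<alpha> - \<beta>'"]
  show "cross_moment P (\<alpha> + \<beta>) (\<alpha> - \<beta>)
      \<le> upper_cross (\<alpha> + \<beta>') (\<alpha> - \<beta>') + \<bar>\<beta> - \<beta>'\<bar> * (\<bar>\<beta>\<bar> + \<bar>\<beta>'\<bar> + 2 * K)"
    unfolding cross_moment_sq_diff by (simp add: abs_le_iff)
qed

lemma sq_diff_has_min: "\<exists>\<alpha>0\<in>interval_hull Ps u. \<forall>\<alpha>. sq_diff \<alpha>0 \<beta> \<le> sq_diff \<alpha> \<beta>"
proof -
  obtain lo hi where hull: "interval_hull Ps u = {lo..hi}"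
    unfolding interval_hull_def by blast
  have "{lo..hi} \<noteq> {}" using interval_hull_nonempty[of Ps u K, OF u_bound nonempty] hull by simp
  moreover have "continuous_on {lo..hi} (\<lambda>\<alpha>. sq_diff \<alpha> \<beta>)"
    using K_nonneg sq_diff_modulus_alpha
    by (intro continuous_on_Icc_if_quadratic_modulus[where C = "2 * K"]) simp_all
  ultimately obtain \<alpha>0 where \<alpha>0: "\<alpha>0 \<in> {lo..hi}" "\<And>\<alpha>. \<alpha> \<in> {lo..hi} \<Longrightarrow> sq_diff \<alpha>0 \<beta> \<le> sq_diff \<alpha> \<beta>"
    using continuous_attains_inf[OF compact_Icc] by blast
  have "sq_diff \<alpha>0 \<beta> \<le> sq_diff \<alpha> \<beta>" for \<alpha>
  proof -
    \<comment> \<open>every u P lies in [lo, hi], so clamping \<alpha> to [lo, hi] brings it closer to all of them\<close>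
    define p where "p = max lo (min hi \<alpha>)"
    have "\<bar>p - u P\<bar> \<le> \<bar>\<alpha> - u P\<bar>" if "P \<in> Ps" for P
      using mem_interval_hull[of Ps u K, OF u_bound that] hull
      unfolding p_def by (auto simp: max_def min_def abs_if)
    then have "sq_diff p \<beta> \<le> sq_diff \<alpha> \<beta>" by (rule sq_diff_le_if_closer)
    moreover have "p \<in> {lo..hi}" unfolding p_def using \<open>{lo..hi} \<noteq> {}\<close> by auto
    ultimately show ?thesis using \<alpha>0(2) by (meson order_trans)
  qed
  then show ?thesis using \<alpha>0(1) hull by blast
qed

lemma bdd_below_sq_diff: "bdd_below (range (\<lambda>\<alpha>. sq_diff \<alpha> \<beta>))"
  using sq_diff_has_min[of \<beta>] by (auto intro: bdd_belowI2)

lemma min_sq_diff_le: "min_sq_diff \<beta> \<le> sq_diff \<alpha> \<beta>"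
  unfolding min_sq_diff_def by (rule cINF_lower[OF bdd_below_sq_diff]) simp

lemma min_sq_diff_attained: "\<exists>\<alpha>\<in>interval_hull Ps u. min_sq_diff \<beta> = sq_diff \<alpha> \<beta>"
proof -
  obtain \<alpha>0 where "\<alpha>0 \<in> interval_hull Ps u" "\<And>\<alpha>. sq_diff \<alpha>0 \<beta> \<le> sq_diff \<alpha> \<beta>"
    using sq_diff_has_min by blast
  moreover from this have "min_sq_diff \<beta> = sq_diff \<alpha>0 \<beta>"
    unfolding min_sq_diff_def by (intro cInf_eq_minimum) auto
  ultimately show ?thesis by blast
qed

lemma min_sq_diff_modulus:
  "min_sq_diff \<beta> \<le> min_sq_diff \<beta>' + \<bar>\<beta> - \<beta>'\<bar> * (\<bar>\<beta>\<bar> + \<bar>\<beta>'\<bar> + 2 * K)"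
proof -
  have "min_sq_diff \<beta> - \<bar>\<beta> - \<beta>'\<bar> * (\<bar>\<beta>\<bar> + \<bar>\<beta>'\<bar> + 2 * K) \<le> min_sq_diff \<beta>'"
    unfolding min_sq_diff_def[of \<beta>']
  proof (rule cINF_greatest)
    fix \<alpha>
    show "min_sq_diff \<beta> - \<bar>\<beta> - \<beta>'\<bar> * (\<bar>\<beta>\<bar> + \<bar>\<beta>'\<bar> + 2 * K) \<le> sq_diff \<alpha> \<beta>'"
      using min_sq_diff_le[of \<beta> \<alpha>] sq_diff_modulus_beta[of \<alpha> \<beta> \<beta>'] by linarith
  qed simp
  then show ?thesis by linarith
qed

lemma min_sq_diff_has_max:
  "\<exists>\<beta>0\<in>interval_hull Ps v. \<forall>\<beta>\<in>interval_hull Ps v. min_sq_diff \<beta> \<le> min_sq_diff \<beta>0"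
proof -
  obtain lo hi where hull: "interval_hull Ps v = {lo..hi}"
    unfolding interval_hull_def by blast
  have "continuous_on {lo..hi} min_sq_diff"
    using K_nonneg min_sq_diff_modulus
    by (intro continuous_on_Icc_if_quadratic_modulus[where C = "2 * K"]) simp_all
  then show ?thesis
    using continuous_attains_sup[OF compact_Icc] interval_hull_nonempty[of Ps v K, OF v_bound nonempty]
    unfolding hull by blast
qed

lemma mix_mem_interval_hull:
  assumes "\<And>P. P \<in> Ps \<Longrightarrow> \<bar>z P\<bar> \<le> K" "P \<in> Ps" "Q \<in> Ps" "l \<in> {0..1}"
  shows "mix z P Q l \<in> interval_hull Ps z"
  using assms by (intro mix_mem_convex convex_interval_hull mem_interval_hull[of Ps z K]) auto

lemma mixture_cov_le_min_sq_diff: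
  assumes PQ: "P \<in> Ps" "Q \<in> Ps" and l: "l \<in> {0..1}"
  shows "mixture_cov P Q l \<le> min_sq_diff (mix v P Q l)"
  unfolding min_sq_diff_def
proof (rule cINF_greatest)
  fix \<alpha>
  let ?\<beta> = "mix v P Q l"
  have "(\<alpha> + ?\<beta> - mix x P Q l) * (\<alpha> - ?\<beta> - mix y P Q l) = (\<alpha> - mix u P Q l)^2"
    unfolding mix_def u_def v_def by (simp add: power2_eq_square field_simps)
  then have "mixture_cov P Q l
      \<le> l * cross_moment P (\<alpha> + ?\<beta>) (\<alpha> - ?\<beta>) + (1 - l) * cross_moment Q (\<alpha> + ?\<beta>) (\<alpha> - ?\<beta>)"
    unfolding mix_cross_moment by simp
  also have "\<dots> \<le> sq_diff \<alpha> ?\<beta>"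
    unfolding sq_diff_def by (rule mix_cross_moment_le_upper_cross[OF PQ l])
  finally show "mixture_cov P Q l \<le> sq_diff \<alpha> ?\<beta>" .
qed simp

lemma mixture_cov_le_min_cross:
  assumes PQ: "P \<in> Ps" "Q \<in> Ps" and l: "l \<in> {0..1}"
  shows "mixture_cov P Q l \<le> min_cross (mix y P Q l)"
  unfolding min_cross_def
proof (rule cINF_greatest)
  show "interval_hull Ps x \<noteq> {}" using interval_hull_nonempty[of Ps x K, OF x_bound nonempty] .
  fix m1
  have "mixture_cov P Q l = l * cross_moment P m1 (mix y P Q l) + (1 - l) * cross_moment Q m1 (mix y P Q l)"
    unfolding mix_cross_moment by simp
  also have "\<dots> \<le> upper_cross m1 (mix y P Q l)" by (rule mix_cross_moment_le_upper_cross[OF PQ l])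
  finally show "mixture_cov P Q l \<le> upper_cross m1 (mix y P Q l)" .
qed

lemma bdd_below_upper_cross: "bdd_below ((\<lambda>m1. upper_cross m1 m2) ` interval_hull Ps x)"
proof -
  obtain P where P: "P \<in> Ps" using nonempty by blast
  have "- (K + \<bar>m2\<bar> * K + K * K + K * \<bar>m2\<bar>) \<le> upper_cross m1 m2"
    if "m1 \<in> interval_hull Ps x" for m1
  proof -
    have "\<bar>m1\<bar> \<le> K"
      using subsetD[OF interval_hull_subset[of Ps x K, OF x_bound nonempty] that]
      by (simp add: abs_le_iff)
    then have "\<bar>m1\<bar> * K \<le> K * K" "\<bar>m1\<bar> * \<bar>m2\<bar> \<le> K * \<bar>m2\<bar>"
      using K_nonneg by (auto intro: mult_right_mono)
    then show ?thesis
      using cross_moment_abs_le[OF P, of m1 m2] cross_moment_le_upper_cross[OF P, of m1 m2]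
      by (simp add: abs_le_iff mult.commute)
  qed
  then show ?thesis by (rule bdd_belowI2)
qed

lemma min_cross_le_if_mixtures_le:
  assumes mixtures: "\<And>P Q l. P \<in> Ps \<Longrightarrow> Q \<in> Ps \<Longrightarrow> l \<in> {0..1} \<Longrightarrow> mixture_cov P Q l \<le> c"
  shows "min_cross m2 \<le> c"
proof (rule ccontr)
  assume "\<not> min_cross m2 \<le> c"
  then have "c < upper_cross m1 m2" if "m1 \<in> interval_hull Ps x" for m1
    using less_cINF_D[OF bdd_below_upper_cross _ that] unfolding min_cross_def by simp
  then have above: "\<exists>P\<in>Ps. c < cross_moment P t m2" if "t \<in> interval_hull Ps x" for t
    using less_upper_cross_imp that by blast
  obtain lo hi where hull: "interval_hull Ps x = {lo..hi}" and "lo \<le> hi"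
    using interval_hull_nonempty[of Ps x K, OF x_bound nonempty] unfolding interval_hull_def by auto
  have linear: "cross_moment P t m2 = 0 * t^2 + (m2 - y P) * t + (a P - m2 * x P)" for P t
    unfolding cross_moment_def by (simp add: algebra_simps)
  obtain P Q l where PQ: "P \<in> Ps" "Q \<in> Ps" and l: "l \<in> {0..1}"
    and mix_above: "\<forall>t\<in>{lo..hi}. c < l * cross_moment P t m2 + (1 - l) * cross_moment Q t m2"
    using quadratic_family_two_point_mixture[of 0 lo hi "\<lambda>P t. cross_moment P t m2",
        OF order_refl \<open>lo \<le> hi\<close> linear] above
    unfolding hull by blast
  have "mix x P Q l \<in> {lo..hi}"
    using mix_mem_interval_hull[of x, OF x_bound PQ l] unfolding hull .
  with mix_above have "c < mixture_cov P Q l"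
    unfolding mix_cross_moment by fastforce
  with mixtures[OF PQ l] show False by simp
qed

lemma min_sq_diff_le_if_mixtures_le:
  assumes mixtures: "\<And>P Q l. P \<in> Ps \<Longrightarrow> Q \<in> Ps \<Longrightarrow> l \<in> {0..1} \<Longrightarrow> mixture_cov P Q l \<le> c"
  shows "min_sq_diff \<beta> \<le> c"
proof (rule ccontr)
  assume "\<not> min_sq_diff \<beta> \<le> c"
  then have above: "\<exists>P\<in>Ps. c < cross_moment P (t + \<beta>) (t - \<beta>)" for t
    using min_sq_diff_le[of \<beta> t] less_upper_cross_imp unfolding sq_diff_def by force
  obtain lo hi where hull: "interval_hull Ps u = {lo..hi}" and "lo \<le> hi"
    using interval_hull_nonempty[of Ps u K, OF u_bound nonempty] unfolding interval_hull_def by auto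
  have quadratic: "cross_moment P (t + \<beta>) (t - \<beta>)
      = 1 * t^2 + (- 2 * u P) * t + (a P - \<beta>^2 + 2 * \<beta> * v P)" for P t
    unfolding cross_moment_def u_def v_def by (simp add: power2_eq_square field_simps)
  obtain P Q l where PQ: "P \<in> Ps" "Q \<in> Ps" and l: "l \<in> {0..1}"
    and mix_above: "\<forall>t\<in>{lo..hi}.
      c < l * cross_moment P (t + \<beta>) (t - \<beta>) + (1 - l) * cross_moment Q (t + \<beta>) (t - \<beta>)"
    using quadratic_family_two_point_mixture[of 1 lo hi "\<lambda>P t. cross_moment P (t + \<beta>) (t - \<beta>)",
        OF zero_le_one \<open>lo \<le> hi\<close> quadratic] above by blast
  have "mix u P Q l \<in> {lo..hi}"
    using mix_mem_interval_hull[of u, OF u_bound PQ l] unfolding hull .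
  moreover have "(mix u P Q l + \<beta> - mix x P Q l) * (mix u P Q l - \<beta> - mix y P Q l)
      = - ((\<beta> - mix v P Q l)^2)"
    unfolding mix_def u_def v_def by (simp add: power2_eq_square field_simps)
  ultimately have "c < mixture_cov P Q l - (\<beta> - mix v P Q l)^2"
    using mix_above unfolding mix_cross_moment by fastforce
  with mixtures[OF PQ l] show False by (smt (verit) zero_le_power2)
qed

lemma cov_value_maximin:
  obtains \<beta>0 where "\<beta>0 \<in> interval_hull Ps v" "min_sq_diff \<beta>0 = cov_value"
    "\<And>\<beta>. min_sq_diff \<beta> \<le> cov_value"
proof -
  obtain \<beta>0 where \<beta>0: "\<beta>0 \<in> interval_hull Ps v"
    "\<And>\<beta>. \<beta> \<in> interval_hull Ps v \<Longrightarrow> min_sq_diff \<beta> \<le> min_sq_diff \<beta>0"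
    using min_sq_diff_has_max by blast
  have "mixture_cov P Q l \<le> min_sq_diff \<beta>0" if "P \<in> Ps" "Q \<in> Ps" "l \<in> {0..1}" for P Q l
    using mixture_cov_le_min_sq_diff[OF that] \<beta>0(2)[OF mix_mem_interval_hull[of v, OF v_bound that]]
    by linarith
  then have min_cross_le: "min_cross m2 \<le> min_sq_diff \<beta>0" for m2
    by (rule min_cross_le_if_mixtures_le)
  have "interval_hull Ps y \<noteq> {}"
    using interval_hull_nonempty[of Ps y K, OF y_bound nonempty] .
  then have le: "cov_value \<le> min_sq_diff \<beta>0"
    unfolding cov_value_def using min_cross_le by (rule cSUP_least)
  have "mixture_cov P Q l \<le> cov_value" if PQl: "P \<in> Ps" "Q \<in> Ps" "l \<in> {0..1}" for P Q l
  proof -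
    have "bdd_above (min_cross ` interval_hull Ps y)"
      by (rule bdd_aboveI2[where M = "min_sq_diff \<beta>0"]) (rule min_cross_le)
    moreover have "mix y P Q l \<in> interval_hull Ps y"
      by (rule mix_mem_interval_hull[of y, OF y_bound PQl])
    ultimately have "min_cross (mix y P Q l) \<le> cov_value"
      unfolding cov_value_def by (intro cSUP_upper)
    then show ?thesis using mixture_cov_le_min_cross[OF PQl] by linarith
  qed
  then have "min_sq_diff \<beta> \<le> cov_value" for \<beta>
    by (rule min_sq_diff_le_if_mixtures_le)
  with le \<beta>0(1) show ?thesis using that by (meson order_antisym)
qed

lemma is_maxmin_cov_value: "is_maxmin cov_value (\<lambda>\<beta> \<alpha>. sq_diff \<alpha> \<beta>)"
proof -
  obtain \<beta>0 where "min_sq_diff \<beta>0 = cov_value" "\<And>\<beta>. min_sq_diff \<beta> \<le> cov_value"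
    using cov_value_maximin by blast
  then show ?thesis
    unfolding is_maxmin_def min_sq_diff_def using sq_diff_has_min by blast
qed

lemma cov_value_attained: "\<exists>\<alpha>\<in>interval_hull Ps u. \<exists>\<beta>\<in>interval_hull Ps v. cov_value = sq_diff \<alpha> \<beta>"
proof -
  obtain \<beta>0 where "\<beta>0 \<in> interval_hull Ps v" "min_sq_diff \<beta>0 = cov_value"
    using cov_value_maximin by blast
  then show ?thesis using min_sq_diff_attained[of \<beta>0] by metis
qed

end

section \<open>Random variables with finite second moments\<close>

lemma abs_integral_le_integral:
  fixes f g :: "'a \<Rightarrow> real"
  assumes "integrable M f" "integrable M g" "\<And>w. \<bar>f w\<bar> \<le> g w"
  shows "\<bar>integral\<^sup>L M f\<bar> \<le> integral\<^sup>L M g"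
proof -
  have "\<bar>integral\<^sup>L M f\<bar> \<le> integral\<^sup>L M (\<lambda>w. \<bar>f w\<bar>)"
    using integral_norm_bound[of M f] by (simp only: real_norm_def)
  also have "\<dots> \<le> integral\<^sup>L M g"
    using assms by (intro integral_mono) auto
  finally show ?thesis .
qed

lemma (in prob_space) square_integrable_moments:
  fixes X Y :: "'a \<Rightarrow> real"
  assumes X: "X \<in> borel_measurable M" "integrable M (\<lambda>w. (X w)^2)"
    and Y: "Y \<in> borel_measurable M" "integrable M (\<lambda>w. (Y w)^2)"
  shows "integrable M X" "integrable M (\<lambda>w. X w * Y w)"
    and "\<bar>expectation X\<bar> \<le> 1 + expectation (\<lambda>w. (X w)^2)"
    and "\<bar>expectation (\<lambda>w. X w * Y w)\<bar> \<le> expectation (\<lambda>w. (X w)^2) + expectation (\<lambda>w. (Y w)^2)"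
proof -
  have abs_le: "\<bar>t\<bar> \<le> 1 + t^2" for t :: real
  proof -
    have "2 * \<bar>t\<bar> \<le> t^2 + 1"
      using sum_squares_bound[of "\<bar>t\<bar>" 1] by simp
    moreover have "0 \<le> \<bar>t\<bar>" by simp
    ultimately show ?thesis by linarith
  qed
  have abs_mult_le: "\<bar>s * t\<bar> \<le> s^2 + t^2" for s t :: real
  proof -
    have "2 * (\<bar>s\<bar> * \<bar>t\<bar>) \<le> s^2 + t^2"
      using sum_squares_bound[of "\<bar>s\<bar>" "\<bar>t\<bar>"] by (simp add: mult.assoc)
    moreover have "0 \<le> \<bar>s\<bar> * \<bar>t\<bar>" by simp
    ultimately show ?thesis unfolding abs_mult by linarith
  qed
  show iX: "integrable M X" by (rule square_integrable_imp_integrable[OF X])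
  show iXY: "integrable M (\<lambda>w. X w * Y w)"
  proof (rule Bochner_Integration.integrable_bound)
    show "integrable M (\<lambda>w. (X w)^2 + (Y w)^2)" using X Y by simp
    show "(\<lambda>w. X w * Y w) \<in> borel_measurable M" using X Y by simp
    have "norm (X w * Y w) \<le> norm ((X w)^2 + (Y w)^2)" for w
      using abs_mult_le[of "X w" "Y w"] by simp
    then show "AE w in M. norm (X w * Y w) \<le> norm ((X w)^2 + (Y w)^2)" by simp
  qed
  show "\<bar>expectation X\<bar> \<le> 1 + expectation (\<lambda>w. (X w)^2)"
    using abs_integral_le_integral[OF iX _ abs_le] X(2) prob_space by simp
  show "\<bar>expectation (\<lambda>w. X w * Y w)\<bar> \<le> expectation (\<lambda>w. (X w)^2) + expectation (\<lambda>w. (Y w)^2)"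
    using abs_integral_le_integral[OF iXY _ abs_mult_le] X(2) Y(2)
    by simp
qed

lemma upper_cov_uminus_right: "upper_cov Ps X (\<lambda>w. - Y w) = - lower_cov Ps X Y"
proof -
  have mean_set_uminus: "mean_set Ps (\<lambda>w. - Y w) = uminus ` mean_set Ps Y"
    unfolding mean_set_def lower_mean_def upper_mean_def by simp
  have "(\<lambda>w. (X w - m1) * (- Y w - - m2)) = (\<lambda>w. - ((X w - m1) * (Y w - m2)))" for m1 m2 :: real
    by (simp add: fun_eq_iff algebra_simps)
  then have "upper_cov Ps X (\<lambda>w. - Y w) = (SUP m2\<in>mean_set Ps Y. INF m1\<in>mean_set Ps X.
       sub_exp Ps (\<lambda>w. - ((X w - m1) * (Y w - m2))))"
    unfolding upper_cov_def mean_set_uminus image_image by simp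
  then show ?thesis
    unfolding lower_cov_def Inf_real_def by (simp add: image_image)
qed

lemma is_maxmin_imp_is_minmax_uminus: "is_maxmin v F \<Longrightarrow> is_minmax (- v) (\<lambda>a b. - F a b)"
proof -
  have "(SUP b. - F a b) = - (INF b. F a b)" for a
    by (simp add: Inf_real_def image_image)
  then show "is_maxmin v F \<Longrightarrow> is_minmax (- v) (\<lambda>a b. - F a b)"
    unfolding is_maxmin_def is_minmax_def by auto
qed

locale finite_second_moments =
  fixes M :: "'a measure" and Ps :: "'a measure set" and X Y :: "'a \<Rightarrow> real"
  assumes Ps_ne: "Ps \<noteq> {}"
    and Ps_prob: "\<And>P. P \<in> Ps \<Longrightarrow> prob_space P \<and> sets P = sets M"
    and X_meas: "X \<in> borel_measurable M" and Y_meas: "Y \<in> borel_measurable M"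
    and X_sq: "\<And>P. P \<in> Ps \<Longrightarrow> integrable P (\<lambda>w. (X w)^2)"
    and Y_sq: "\<And>P. P \<in> Ps \<Longrightarrow> integrable P (\<lambda>w. (Y w)^2)"
    and X_bdd: "bdd_above ((\<lambda>P. integral\<^sup>L P (\<lambda>w. (X w)^2)) ` Ps)"
    and Y_bdd: "bdd_above ((\<lambda>P. integral\<^sup>L P (\<lambda>w. (Y w)^2)) ` Ps)"
begin

lemma moment_estimates:
  assumes "P \<in> Ps"
  shows "integrable P X" "integrable P Y" "integrable P (\<lambda>w. X w * Y w)"
    and "\<bar>integral\<^sup>L P X\<bar> \<le> 1 + integral\<^sup>L P (\<lambda>w. (X w)^2)"
    and "\<bar>integral\<^sup>L P Y\<bar> \<le> 1 + integral\<^sup>L P (\<lambda>w. (Y w)^2)"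
    and "\<bar>integral\<^sup>L P (\<lambda>w. X w * Y w)\<bar> \<le> integral\<^sup>L P (\<lambda>w. (X w)^2) + integral\<^sup>L P (\<lambda>w. (Y w)^2)"
proof -
  interpret prob_space P using Ps_prob[OF assms] by blast
  have meas: "X \<in> borel_measurable P" "Y \<in> borel_measurable P"
    using measurable_cong_sets[of P M borel borel] Ps_prob[OF assms] X_meas Y_meas by auto
  note XY = square_integrable_moments[OF meas(1) X_sq[OF assms] meas(2) Y_sq[OF assms]]
  note YX = square_integrable_moments[OF meas(2) Y_sq[OF assms] meas(1) X_sq[OF assms]]
  show "integrable P X" "integrable P Y" "integrable P (\<lambda>w. X w * Y w)"
    by (fact XY(1) YX(1) XY(2))+
  show "\<bar>integral\<^sup>L P X\<bar> \<le> 1 + integral\<^sup>L P (\<lambda>w. (X w)^2)"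
    "\<bar>integral\<^sup>L P Y\<bar> \<le> 1 + integral\<^sup>L P (\<lambda>w. (Y w)^2)"
    "\<bar>integral\<^sup>L P (\<lambda>w. X w * Y w)\<bar> \<le> integral\<^sup>L P (\<lambda>w. (X w)^2) + integral\<^sup>L P (\<lambda>w. (Y w)^2)"
    by (fact XY(3) YX(3) XY(4))+
qed

lemma moments_bounded:
  obtains K where "\<And>P. P \<in> Ps \<Longrightarrow> \<bar>integral\<^sup>L P X\<bar> \<le> K"
    "\<And>P. P \<in> Ps \<Longrightarrow> \<bar>integral\<^sup>L P Y\<bar> \<le> K"
    "\<And>P. P \<in> Ps \<Longrightarrow> \<bar>integral\<^sup>L P (\<lambda>w. X w * Y w)\<bar> \<le> K"
proof -
  obtain BX BY where BX: "\<And>P. P \<in> Ps \<Longrightarrow> integral\<^sup>L P (\<lambda>w. (X w)^2) \<le> BX"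
    and BY: "\<And>P. P \<in> Ps \<Longrightarrow> integral\<^sup>L P (\<lambda>w. (Y w)^2) \<le> BY"
    using X_bdd Y_bdd unfolding bdd_above_def by blast
  show ?thesis
  proof (rule that[of "1 + BX + BY"])
    fix P assume P: "P \<in> Ps"
    have "0 \<le> integral\<^sup>L Q (\<lambda>w. (X w)^2)" "0 \<le> integral\<^sup>L Q (\<lambda>w. (Y w)^2)" for Q
      by simp_all
    with BX[OF P] BY[OF P]
    have "1 + integral\<^sup>L P (\<lambda>w. (X w)^2) \<le> 1 + BX + BY"
      "1 + integral\<^sup>L P (\<lambda>w. (Y w)^2) \<le> 1 + BX + BY"
      "integral\<^sup>L P (\<lambda>w. (X w)^2) + integral\<^sup>L P (\<lambda>w. (Y w)^2) \<le> 1 + BX + BY"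
      by (smt (verit))+
    with moment_estimates(4-6)[OF P]
    show "\<bar>integral\<^sup>L P X\<bar> \<le> 1 + BX + BY" "\<bar>integral\<^sup>L P Y\<bar> \<le> 1 + BX + BY"
      "\<bar>integral\<^sup>L P (\<lambda>w. X w * Y w)\<bar> \<le> 1 + BX + BY"
      by (meson order_trans)+
  qed
qed

lemma integral_centered_product:
  assumes "P \<in> Ps"
  shows "integral\<^sup>L P (\<lambda>w. (X w - m1) * (Y w - m2))
    = integral\<^sup>L P (\<lambda>w. X w * Y w) - m2 * integral\<^sup>L P X - m1 * integral\<^sup>L P Y + m1 * m2"
proof -
  interpret prob_space P using Ps_prob[OF assms] by blast
  note integrable = moment_estimates(1-3)[OF assms]
  have "integral\<^sup>L P (\<lambda>w. (X w - m1) * (Y w - m2))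
      = integral\<^sup>L P (\<lambda>w. (X w * Y w - m2 * X w) - m1 * Y w + m1 * m2)"
    by (rule arg_cong[where f = "integral\<^sup>L P"]) (simp add: fun_eq_iff algebra_simps)
  also have "\<dots> = integral\<^sup>L P (\<lambda>w. (X w * Y w - m2 * X w) - m1 * Y w) + m1 * m2"
    using integrable by (subst Bochner_Integration.integral_add) (auto simp: prob_space)
  also have "integral\<^sup>L P (\<lambda>w. (X w * Y w - m2 * X w) - m1 * Y w)
      = integral\<^sup>L P (\<lambda>w. X w * Y w) - m2 * integral\<^sup>L P X - m1 * integral\<^sup>L P Y"
    using integrable by (simp add: Bochner_Integration.integral_diff)
  finally show ?thesis .
qed

lemma upper_cov_maxmin:
  shows "is_maxmin (upper_cov Ps X Y)
      (\<lambda>\<beta> \<alpha>. sub_exp Ps (\<lambda>w. ((X w + Y w) / 2 - \<alpha>)^2 - ((X w - Y w) / 2 - \<beta>)^2))"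
    and "\<exists>\<alpha>\<in>mean_set Ps (\<lambda>w. (X w + Y w) / 2). \<exists>\<beta>\<in>mean_set Ps (\<lambda>w. (X w - Y w) / 2).
      upper_cov Ps X Y = sub_exp Ps (\<lambda>w. ((X w + Y w) / 2 - \<alpha>)^2 - ((X w - Y w) / 2 - \<beta>)^2)"
proof -
  obtain K where K: "\<And>P. P \<in> Ps \<Longrightarrow> \<bar>integral\<^sup>L P X\<bar> \<le> K"
    "\<And>P. P \<in> Ps \<Longrightarrow> \<bar>integral\<^sup>L P Y\<bar> \<le> K"
    "\<And>P. P \<in> Ps \<Longrightarrow> \<bar>integral\<^sup>L P (\<lambda>w. X w * Y w)\<bar> \<le> K"
    using moments_bounded by blast
  interpret m: bounded_moments Ps "\<lambda>P. integral\<^sup>L P X" "\<lambda>P. integral\<^sup>L P Y"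
    "\<lambda>P. integral\<^sup>L P (\<lambda>w. X w * Y w)" K
    using Ps_ne K by unfold_locales auto
  have cross: "sub_exp Ps (\<lambda>w. (X w - m1) * (Y w - m2)) = m.upper_cross m1 m2" for m1 m2
    unfolding sub_exp_def m.upper_cross_def m.cross_moment_def
    using integral_centered_product by (intro SUP_cong) auto
  have square_diff: "(\<lambda>w. ((X w + Y w) / 2 - \<alpha>)^2 - ((X w - Y w) / 2 - \<beta>)^2)
      = (\<lambda>w. (X w - (\<alpha> + \<beta>)) * (Y w - (\<alpha> - \<beta>)))" for \<alpha> \<beta>
    by (simp add: fun_eq_iff power2_eq_square field_simps)
  have sq_diff: "sub_exp Ps (\<lambda>w. ((X w + Y w) / 2 - \<alpha>)^2 - ((X w - Y w) / 2 - \<beta>)^2)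
      = m.sq_diff \<alpha> \<beta>" for \<alpha> \<beta>
    unfolding m.sq_diff_def square_diff by (rule cross)
  have mean_X: "mean_set Ps X = interval_hull Ps (\<lambda>P. integral\<^sup>L P X)"
    and mean_Y: "mean_set Ps Y = interval_hull Ps (\<lambda>P. integral\<^sup>L P Y)"
    by (rule mean_set_eq_interval_hull, simp)+
  have mean_U: "mean_set Ps (\<lambda>w. (X w + Y w) / 2) = interval_hull Ps m.u"
    and mean_V: "mean_set Ps (\<lambda>w. (X w - Y w) / 2) = interval_hull Ps m.v"
    by (rule mean_set_eq_interval_hull, simp add: m.u_def m.v_def moment_estimates)+
  have "upper_cov Ps X Y = m.cov_value"
    unfolding upper_cov_def m.cov_value_def m.min_cross_def mean_X mean_Y cross ..
  then show "is_maxmin (upper_cov Ps X Y)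
      (\<lambda>\<beta> \<alpha>. sub_exp Ps (\<lambda>w. ((X w + Y w) / 2 - \<alpha>)^2 - ((X w - Y w) / 2 - \<beta>)^2))"
    and "\<exists>\<alpha>\<in>mean_set Ps (\<lambda>w. (X w + Y w) / 2). \<exists>\<beta>\<in>mean_set Ps (\<lambda>w. (X w - Y w) / 2).
      upper_cov Ps X Y = sub_exp Ps (\<lambda>w. ((X w + Y w) / 2 - \<alpha>)^2 - ((X w - Y w) / 2 - \<beta>)^2)"
    unfolding sq_diff mean_U mean_V using m.is_maxmin_cov_value m.cov_value_attained by simp_all
qed

lemma lower_cov_minmax:
  shows "is_minmax (lower_cov Ps X Y)
      (\<lambda>\<alpha> \<beta>. - sub_exp Ps (\<lambda>w. - (((X w + Y w) / 2 - \<alpha>)^2) + ((X w - Y w) / 2 - \<beta>)^2))"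
    and "\<exists>\<alpha>\<in>mean_set Ps (\<lambda>w. (X w + Y w) / 2). \<exists>\<beta>\<in>mean_set Ps (\<lambda>w. (X w - Y w) / 2).
      lower_cov Ps X Y = - sub_exp Ps (\<lambda>w. - (((X w + Y w) / 2 - \<alpha>)^2) + ((X w - Y w) / 2 - \<beta>)^2)"
proof -
  interpret neg: finite_second_moments M Ps X "\<lambda>w. - Y w"
    using Ps_ne Ps_prob X_meas Y_meas X_sq Y_sq X_bdd Y_bdd by unfold_locales auto
  note neg_maxmin = neg.upper_cov_maxmin[unfolded upper_cov_uminus_right]
  show "is_minmax (lower_cov Ps X Y)
      (\<lambda>\<alpha> \<beta>. - sub_exp Ps (\<lambda>w. - (((X w + Y w) / 2 - \<alpha>)^2) + ((X w - Y w) / 2 - \<beta>)^2))"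
    using is_maxmin_imp_is_minmax_uminus[OF neg_maxmin(1)] by simp
  show "\<exists>\<alpha>\<in>mean_set Ps (\<lambda>w. (X w + Y w) / 2). \<exists>\<beta>\<in>mean_set Ps (\<lambda>w. (X w - Y w) / 2).
      lower_cov Ps X Y = - sub_exp Ps (\<lambda>w. - (((X w + Y w) / 2 - \<alpha>)^2) + ((X w - Y w) / 2 - \<beta>)^2)"
  proof -
    from neg_maxmin(2) obtain \<alpha> \<beta> where
      \<alpha>: "\<alpha> \<in> mean_set Ps (\<lambda>w. (X w - Y w) / 2)" and \<beta>: "\<beta> \<in> mean_set Ps (\<lambda>w. (X w + Y w) / 2)"
      and eq: "- lower_cov Ps X Y = sub_exp Ps (\<lambda>w. ((X w - Y w) / 2 - \<alpha>)^2 - ((X w + Y w) / 2 - \<beta>)^2)"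
      by auto
    show ?thesis using eq by (intro bexI[OF _ \<beta>] bexI[OF _ \<alpha>]) simp
  qed
qed

end

theorem lemma3p14:
  fixes M :: "'a measure" and Ps :: "'a measure set" and X Y :: "'a \<Rightarrow> real"
  assumes Ps_ne: "Ps \<noteq> {}"
    and Ps_prob: "\<And>P. P \<in> Ps \<Longrightarrow> prob_space P \<and> sets P = sets M"
    and X_meas: "X \<in> borel_measurable M" and Y_meas: "Y \<in> borel_measurable M"
    and X_sq: "\<And>P. P \<in> Ps \<Longrightarrow> integrable P (\<lambda>w. (X w)^2)"
    and Y_sq: "\<And>P. P \<in> Ps \<Longrightarrow> integrable P (\<lambda>w. (Y w)^2)"
    and X_bdd: "bdd_above ((\<lambda>P. integral\<^sup>L P (\<lambda>w. (X w)^2)) ` Ps)"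
    and Y_bdd: "bdd_above ((\<lambda>P. integral\<^sup>L P (\<lambda>w. (Y w)^2)) ` Ps)"
  defines "U \<equiv> (\<lambda>w. (X w + Y w) / 2)" and "V \<equiv> (\<lambda>w. (X w - Y w) / 2)"
  shows
    "is_maxmin (upper_cov Ps X Y)
        (\<lambda>\<beta> \<alpha>. sub_exp Ps (\<lambda>w. (U w - \<alpha>)^2 - (V w - \<beta>)^2))
     \<and> (\<exists>\<alpha>s\<in>mean_set Ps U. \<exists>\<beta>s\<in>mean_set Ps V.
          upper_cov Ps X Y = sub_exp Ps (\<lambda>w. (U w - \<alpha>s)^2 - (V w - \<beta>s)^2))
     \<and> is_minmax (lower_cov Ps X Y)
        (\<lambda>\<alpha> \<beta>. - sub_exp Ps (\<lambda>w. - ((U w - \<alpha>)^2) + (V w - \<beta>)^2))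
     \<and> (\<exists>\<alpha>s\<in>mean_set Ps U. \<exists>\<beta>s\<in>mean_set Ps V.
          lower_cov Ps X Y = - sub_exp Ps (\<lambda>w. - ((U w - \<alpha>s)^2) + (V w - \<beta>s)^2))"
proof -
  interpret finite_second_moments M Ps X Y
    using Ps_ne Ps_prob X_meas Y_meas X_sq Y_sq X_bdd Y_bdd by unfold_locales
  show ?thesis
    unfolding U_def V_def using upper_cov_maxmin lower_cov_minmax by blast
qed

end
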